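(* Let $R$ be a local renormalisation operator, built from a permutation-invariant map $r:\mathcal{Q}\to\mathbb{R}$ and extended to $\mathring{\mathcal{N}}\cup\mathring{\mathcal{W}}$ by the formula $R(\tau)=q_F\tau+\sum_{\tau'\in\mathcal{Q}}r(\tau')C_-(\tau',\tau)$. Then for every $\tau\in\mathring{\mathcal{N}}\cup\mathring{\mathcal{W}}$, $$\Delta R\tau=(R\otimes\mathrm{Id})\Delta\tau.$$
   Context: Fix $d\ge1$, $\delta>0$. Trees: $\widehat{\mathcal{T}}_r$ is the smallest set containing generators $\mathbf{1},\mathbf{X}_1,\dots,\mathbf{X}_d,\Xi$ and closed under $(\tau_1,\tau_2,\tau_3)\mapsto\mathcal{I}(\tau_1)\mathcal{I}(\tau_2)\mathcal{I}(\tau_3)$ (formal non-commutative tree product of planted trees). Orders: $|\mathbf{1}|=-2$, $|\mathbf{X}_i|=-1$, $|\Xi|=-3+\delta$, $|\mathcal{I}(\tau_1)\mathcal{I}(\tau_2)\mathcal{I}(\tau_3)|=6+\sum|\tau_k|$, $|\mathcal{I}(\tau)|=|\tau|+2$. $\mathrm{Poly}=\{\mathbf{1},\mathbf{X}_1,..,\mathbf{X}_d\}$, $\mathcal{W}=\{|\tau|<-2\}$, $\mathring{\mathcal{W}}=\mathcal{W}\setminus\{\Xi\}$, $\mathcal{N}=\{-2\le|\tau|\le0\}$, $\mathring{\mathcal{N}}=\mathcal{N}\setminus\mathrm{Poly}$, $\widetilde{\mathcal{N}}=\{\tau\in\mathring{\mathcal{N}}:-1<|\tau|<0\}$, $\mathcal{T}_r=\mathcal{W}\cup\mathring{\mathcal{N}}$.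 Standing assumption: no tree in $\mathcal{W}\cup\mathring{\mathcal{N}}$ has integer order. Truncation convention: a tree product of planted trees with positive total order is $0$. Derivative edges: symbols $\mathcal{I}^+_i(\tau)$ for $\tau\in\widetilde{\mathcal{N}}\cup\{\mathbf{X}_i\}$ with $\mathcal{I}^+_i(\mathbf{X}_j)=0$ ($j\ne i$), $\mathcal{I}^+_i(\tau)=0$ for $\tau\in\mathring{\mathcal{N}}\setminus\widetilde{\mathcal{N}}$; symbols $\mathcal{I}^-_i(\tau)$ for $\tau\in\mathcal{T}_r$ (order $|\tau|+1$), with $\mathcal{I}^-_i(\mathbf{X}_i)=\mathcal{I}^+_i(\mathbf{X}_i)$, $\mathcal{I}^-_i(\mathbf{1})=0$, $\mathcal{I}^-_i(\mathbf{X}_j)=0$ for $j\ne i$. $\mathcal{T}_{l,-}$ is the set of planted trees $\mathcal{I}(\tau)$ ($\tau\in\mathcal{T}_r\cup\mathrm{Poly}$), $\mathcal{I}^-_i(\tau)$ ($\tau\in\mathcal{T}_r$), $\mathcal{I}^+_i(\mathbf{X}_i)$; $\mathcal{T}^{\mathrm{cen}}=\{\mathcal{I}(\tau):\tau\in\mathcal{N}\}\cup\{\mathcal{I}^+_i(\tau):\tau\in\widetilde{\mathcal{N}}\cup\{\mathbf{X}_i\}\}$. $\mathrm{Alg}(S)$ is the free unital non-commutative algebra on planted trees $S$ (forest product $\cdot$, unit $1$ = empty forest). Coproduct $\Delta$, recursively: $\Delta\mathcal{I}(\mathbf{1})=\mathcal{I}(\mathbf{1})\otimes\mathcal{I}(\mathbf{1})$;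 $\Delta\mathcal{I}(\mathbf{X}_i)=\mathcal{I}(\mathbf{1})\otimes\mathcal{I}(\mathbf{X}_i)+\mathcal{I}(\mathbf{X}_i)\otimes\mathcal{I}^+_i(\mathbf{X}_i)$; $\Delta\mathcal{I}^+_i(\mathbf{X}_i)=\mathcal{I}^+_i(\mathbf{X}_i)\otimes\mathcal{I}^+_i(\mathbf{X}_i)$; $\Delta w=w\otimes1$, $\Delta\mathcal{I}(w)=\mathcal{I}(w)\otimes1$ ($w\in\mathcal{W}$); for $\tau\in\mathring{\mathcal{N}}$: $\Delta\mathcal{I}(\tau)=\mathcal{I}(\mathbf{1})\otimes\mathcal{I}(\tau)+\sum_i\mathcal{I}(\mathbf{X}_i)\otimes\mathcal{I}^+_i(\tau)+(\mathcal{I}\otimes\mathrm{Id})\Delta\tau$; for $\tau\in\widetilde{\mathcal{N}}$: $\Delta\mathcal{I}^+_i(\tau)=\mathcal{I}^+_i(\mathbf{X}_i)\otimes\mathcal{I}^+_i(\tau)+(\mathcal{I}^+_i\otimes\mathrm{Id})\Delta\tau$; for $\mathcal{I}(\tau_1)\mathcal{I}(\tau_2)\mathcal{I}(\tau_3)\in\mathring{\mathcal{N}}$: $\Delta(\mathcal{I}(\tau_1)\mathcal{I}(\tau_2)\mathcal{I}(\tau_3))=\prod_k\Delta\mathcal{I}(\tau_k)$ with $\prod_k(\sigma_k\otimes a_k)=\sigma_1\sigma_2\sigma_3\otimes a_1\cdot a_2\cdot a_3$; for $\tau\in\mathcal{T}_r$: $\Delta\mathcal{I}^-_i(\tau)=(\mathcal{I}^-_i\otimes\mathrm{Id})\Delta\tau+\mathcal{I}^+_i(\mathbf{X}_i)\otimes\mathcal{I}^+_i(\tau)$.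 $\Delta$ is linear, and on forests multiplicative: $\Delta1=1\otimes1$, $\Delta(\sigma_1\cdots\sigma_n)=(\Delta\sigma_1)\cdots(\Delta\sigma_n)$ componentwise. $C_-(\bar\tau,\tau)$ for $\bar\tau,\tau\in\mathcal{N}\cup\mathcal{W}$, a forest of planted trees in $\mathcal{T}_{l,-}$ or $0$, defined recursively in $\tau$: $C_-(\mathbf{1},\mathbf{1})=\mathcal{I}(\mathbf{1})$; $C_-(\mathbf{1},\mathbf{X}_j)=\mathcal{I}(\mathbf{X}_j)$; $C_-(\mathbf{X}_i,\mathbf{X}_j)=\mathcal{I}^-_i(\mathbf{X}_j)$; $C_-(\mathbf{1},\Xi)=\mathcal{I}(\Xi)$, $C_-(\mathbf{X}_i,\Xi)=\mathcal{I}^-_i(\Xi)$, $C_-(\Xi,\Xi)=1$; for $\tau=\mathcal{I}(\tau_1)\mathcal{I}(\tau_2)\mathcal{I}(\tau_3)$: $C_-(\mathbf{1},\tau)=\mathcal{I}(\tau)$, $C_-(\mathbf{X}_i,\tau)=\mathcal{I}^-_i(\tau)$, $C_-(\mathcal{I}(\bar\tau_1)\mathcal{I}(\bar\tau_2)\mathcal{I}(\bar\tau_3),\tau)=\prod_kC_-(\bar\tau_k,\tau_k)$ (forest product); all other values are $0$. $\mathcal{Q}$ is the set of trees $\mathcal{I}(\tau_1)\mathcal{I}(\tau_2)\mathcal{I}(\tau_3)\in\mathring{\mathcal{N}}\cup\mathring{\mathcal{W}}$ with no $\tau_k\in\{\mathbf{X}_1,\dots,\mathbf{X}_d\}$ and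 at most one $\tau_k=\mathbf{1}$. $q_F$ maps $\mathcal{I}(\tau_1)\mathcal{I}(\tau_2)\mathcal{I}(\tau_3)$ to the forest $\mathcal{I}(\tau_1)\cdot\mathcal{I}(\tau_2)\cdot\mathcal{I}(\tau_3)$. Given $r:\mathcal{Q}\to\mathbb{R}$ invariant under reordering the factors of tree products, the associated local renormalisation operator is $R(\tau)=q_F\tau+\sum_{\tau'\in\mathcal{Q}}r(\tau')C_-(\tau',\tau)\in\mathrm{Alg}(\mathcal{T}_{l,-})$; $R$ is applied linearly to the left tensor factor of $\Delta\tau$. *)

theory Defs
  imports Complex_Main "HOL-Library.Poly_Mapping"
begin

text \<open>Trees of \<open>\<widehat>T_r\<close>: generators \<open>1\<close>, \<open>X_i\<close>, \<open>\<Xi>\<close>, and the (non-commutative)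
  tree product \<open>P a b c = I(a) I(b) I(c)\<close>.\<close>

datatype tree = One | X nat | Xi | P tree tree tree

fun valid :: "nat \<Rightarrow> tree \<Rightarrow> bool" where
  "valid d One = True"
| "valid d (X i) = (1 \<le> i \<and> i \<le> d)"
| "valid d Xi = True"
| "valid d (P a b c) = (valid d a \<and> valid d b \<and> valid d c)"

fun ord :: "real \<Rightarrow> tree \<Rightarrow> real" where
  "ord \<delta> One = -2"
| "ord \<delta> (X i) = -1"
| "ord \<delta> Xi = -3 + \<delta>"
| "ord \<delta> (P a b c) = 6 + ord \<delta> a + ord \<delta> b + ord \<delta> c"

definition isPoly :: "tree \<Rightarrow> bool" where
  "isPoly \<tau> \<longleftrightarrow> \<tau> = One \<or> (\<exists>i. \<tau> = X i)"

definition inW :: "real \<Rightarrow> tree \<Rightarrow> bool" where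
  "inW \<delta> \<tau> \<longleftrightarrow> ord \<delta> \<tau> < -2"

definition inWo :: "real \<Rightarrow> tree \<Rightarrow> bool" where
  "inWo \<delta> \<tau> \<longleftrightarrow> inW \<delta> \<tau> \<and> \<tau> \<noteq> Xi"

definition inN :: "real \<Rightarrow> tree \<Rightarrow> bool" where
  "inN \<delta> \<tau> \<longleftrightarrow> -2 \<le> ord \<delta> \<tau> \<and> ord \<delta> \<tau> \<le> 0"

definition inNo :: "real \<Rightarrow> tree \<Rightarrow> bool" where
  "inNo \<delta> \<tau> \<longleftrightarrow> inN \<delta> \<tau> \<and> \<not> isPoly \<tau>"

definition inNt :: "real \<Rightarrow> tree \<Rightarrow> bool" where
  "inNt \<delta> \<tau> \<longleftrightarrow> inNo \<delta> \<tau> \<and> -1 < ord \<delta> \<tau> \<and> ord \<delta> \<tau> < 0"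

text \<open>Planted trees: \<open>I \<tau>\<close> is \<open>\<I>(\<tau>)\<close>, \<open>Ip i \<tau>\<close> is \<open>\<I>^+_i(\<tau>)\<close>, \<open>Im i \<tau>\<close> is \<open>\<I>^-_i(\<tau>)\<close>.
  Forests (elements of the free non-commutative monoid) are lists; the empty list is the
  unit \<open>1\<close>, concatenation the forest product.  Elements of the algebras / tensor products
  are finitely supported real linear combinations of basis elements (\<open>\<Rightarrow>\<^sub>0 real\<close>);
  the tensor \<open>a \<otimes> b\<close> of basis elements is the pair \<open>(a, b)\<close>.\<close>

datatype planted = I tree | Ip nat tree | Im nat tree

definition sg :: "'a \<Rightarrow> 'a \<Rightarrow>\<^sub>0 real" where
  "sg k = Poly_Mapping.single k 1"

definition smult :: "real \<Rightarrow> ('a \<Rightarrow>\<^sub>0 real) \<Rightarrow> 'a \<Rightarrow>\<^sub>0 real" where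
  "smult c p = Poly_Mapping.map ((*) c) p"

definition lin :: "('a \<Rightarrow> 'b \<Rightarrow>\<^sub>0 real) \<Rightarrow> ('a \<Rightarrow>\<^sub>0 real) \<Rightarrow> 'b \<Rightarrow>\<^sub>0 real" where
  "lin f p = (\<Sum>k\<in>Poly_Mapping.keys p. smult (Poly_Mapping.lookup p k) (f k))"

text \<open>Identifications: \<open>\<I>^+_i(X_i)\<close> is a basis element, \<open>\<I>^+_i(\<tau>)\<close> for \<open>\<tau> \<in> \<widetilde>N\<close> is a basis
  element, and \<open>\<I>^+_i\<close> of anything else is \<open>0\<close>.  \<open>\<I>^-_i(X_i) = \<I>^+_i(X_i)\<close>,
  \<open>\<I>^-_i(1) = \<I>^-_i(X_j) = 0\<close> (\<open>j \<noteq> i\<close>).\<close>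

definition mkIp :: "real \<Rightarrow> nat \<Rightarrow> tree \<Rightarrow> planted list \<Rightarrow>\<^sub>0 real" where
  "mkIp \<delta> i \<tau> = (if \<tau> = X i then sg [Ip i (X i)]
                  else if inNt \<delta> \<tau> then sg [Ip i \<tau>] else 0)"

definition mkIm :: "nat \<Rightarrow> tree \<Rightarrow> planted list \<Rightarrow>\<^sub>0 real" where
  "mkIm i \<tau> = (if \<tau> = X i then sg [Ip i (X i)]
               else if isPoly \<tau> then 0 else sg [Im i \<tau>])"

text \<open>Elements of the form \<open>(\<sigma>, f)\<close> with \<open>\<sigma>\<close> a tree stand for \<open>\<I>(\<sigma>) \<otimes> f\<close> in \<open>mul3\<close>'s inputs,
  and for \<open>\<sigma> \<otimes> f\<close> in its output.\<close>

definition mul3 :: "real \<Rightarrow> (tree \<times> planted list \<Rightarrow>\<^sub>0 real) \<Rightarrow> (tree \<times> planted list \<Rightarrow>\<^sub>0 real)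
     \<Rightarrow> (tree \<times> planted list \<Rightarrow>\<^sub>0 real) \<Rightarrow> (tree \<times> planted list \<Rightarrow>\<^sub>0 real)" where
  "mul3 \<delta> p1 p2 p3 =
     lin (\<lambda>(s1, f1). lin (\<lambda>(s2, f2). lin (\<lambda>(s3, f3).
        if ord \<delta> (P s1 s2 s3) \<le> 0 then sg (P s1 s2 s3, f1 @ f2 @ f3) else 0) p3) p2) p1"

text \<open>\<open>dI d \<delta> \<tau> D\<close> is \<open>\<Delta>\<I>(\<tau>)\<close>, given \<open>D = \<Delta>\<tau>\<close>; a basis element \<open>(\<sigma>, f)\<close> of the result
  stands for \<open>\<I>(\<sigma>) \<otimes> f\<close>.\<close>

definition dI :: "nat \<Rightarrow> real \<Rightarrow> tree \<Rightarrow> (tree \<times> planted list \<Rightarrow>\<^sub>0 real)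
     \<Rightarrow> (tree \<times> planted list \<Rightarrow>\<^sub>0 real)" where
  "dI d \<delta> \<tau> D =
    (case \<tau> of
       One \<Rightarrow> sg (One, [I One])
     | X i \<Rightarrow> sg (One, [I (X i)]) + sg (X i, [Ip i (X i)])
     | _ \<Rightarrow> if inW \<delta> \<tau> then sg (\<tau>, [])
           else if inNo \<delta> \<tau> then
             sg (One, [I \<tau>])
             + (\<Sum>i\<in>{1..d}. lin (\<lambda>w. sg (X i, w)) (mkIp \<delta> i \<tau>))
             + D
           else 0)"

text \<open>\<open>deltaT d \<delta> \<tau>\<close> is \<open>\<Delta>\<tau>\<close> for trees \<open>\<tau> \<in> W \<union> N\<^sup>o\<close>; a basis element \<open>(\<sigma>, f)\<close> stands for
  \<open>\<sigma> \<otimes> f\<close>.  (\<open>\<Delta>\<close> is not defined on polynomial trees; there the value \<open>0\<close> is a dummy.)\<close>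

fun deltaT :: "nat \<Rightarrow> real \<Rightarrow> tree \<Rightarrow> (tree \<times> planted list \<Rightarrow>\<^sub>0 real)" where
  "deltaT d \<delta> One = 0"
| "deltaT d \<delta> (X i) = 0"
| "deltaT d \<delta> Xi = sg (Xi, [])"
| "deltaT d \<delta> (P a b c) =
     (if inW \<delta> (P a b c) then sg (P a b c, [])
      else if ord \<delta> (P a b c) \<le> 0 then
        mul3 \<delta> (dI d \<delta> a (deltaT d \<delta> a)) (dI d \<delta> b (deltaT d \<delta> b)) (dI d \<delta> c (deltaT d \<delta> c))
      else 0)"

definition deltaP :: "nat \<Rightarrow> real \<Rightarrow> planted \<Rightarrow> (planted list \<times> planted list \<Rightarrow>\<^sub>0 real)" where
  "deltaP d \<delta> p =
    (case p of
       I \<tau> \<Rightarrow> lin (\<lambda>(\<sigma>, f). sg ([I \<sigma>], f)) (dI d \<delta> \<tau> (deltaT d \<delta> \<tau>))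
     | Ip i \<tau> \<Rightarrow>
         (if \<tau> = X i then sg ([Ip i (X i)], [Ip i (X i)])
          else if inNt \<delta> \<tau> then
            sg ([Ip i (X i)], [Ip i \<tau>])
            + lin (\<lambda>(\<sigma>, f). lin (\<lambda>w. sg (w, f)) (mkIp \<delta> i \<sigma>)) (deltaT d \<delta> \<tau>)
          else 0)
     | Im i \<tau> \<Rightarrow>
         (if \<tau> = X i then sg ([Ip i (X i)], [Ip i (X i)])
          else if isPoly \<tau> then 0
          else lin (\<lambda>(\<sigma>, f). lin (\<lambda>w. sg (w, f)) (mkIm i \<sigma>)) (deltaT d \<delta> \<tau>)
               + lin (\<lambda>w. sg ([Ip i (X i)], w)) (mkIp \<delta> i \<tau>)))"

fun deltaF :: "nat \<Rightarrow> real \<Rightarrow> planted list \<Rightarrow> (planted list \<times> planted list \<Rightarrow>\<^sub>0 real)" where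
  "deltaF d \<delta> [] = sg ([], [])"
| "deltaF d \<delta> (p # ps) =
     lin (\<lambda>(a, b). lin (\<lambda>(c, e). sg (a @ c, b @ e)) (deltaF d \<delta> ps)) (deltaP d \<delta> p)"

fun Cm :: "tree \<Rightarrow> tree \<Rightarrow> planted list \<Rightarrow>\<^sub>0 real" where
  "Cm One One = sg [I One]"
| "Cm One (X j) = sg [I (X j)]"
| "Cm (X i) (X j) = mkIm i (X j)"
| "Cm One Xi = sg [I Xi]"
| "Cm (X i) Xi = mkIm i Xi"
| "Cm Xi Xi = sg []"
| "Cm One (P a b c) = sg [I (P a b c)]"
| "Cm (X i) (P a b c) = mkIm i (P a b c)"
| "Cm (P a' b' c') (P a b c) =
     lin (\<lambda>u. lin (\<lambda>v. lin (\<lambda>w. sg (u @ v @ w)) (Cm c' c)) (Cm b' b)) (Cm a' a)"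
| "Cm _ _ = 0"

fun qF :: "tree \<Rightarrow> planted list \<Rightarrow>\<^sub>0 real" where
  "qF (P a b c) = sg [I a, I b, I c]"
| "qF _ = 0"

definition Qset :: "nat \<Rightarrow> real \<Rightarrow> tree set" where
  "Qset d \<delta> = {\<tau>. valid d \<tau> \<and> (inNo \<delta> \<tau> \<or> inWo \<delta> \<tau>) \<and>
      (\<exists>a b c. \<tau> = P a b c
         \<and> (\<forall>j. a \<noteq> X j \<and> b \<noteq> X j \<and> c \<noteq> X j)
         \<and> \<not> (a = One \<and> b = One) \<and> \<not> (a = One \<and> c = One) \<and> \<not> (b = One \<and> c = One))}"

definition Rop :: "nat \<Rightarrow> real \<Rightarrow> (tree \<Rightarrow> real) \<Rightarrow> tree \<Rightarrow> planted list \<Rightarrow>\<^sub>0 real" where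
  "Rop d \<delta> r \<tau> = qF \<tau> + (\<Sum>\<tau>'\<in>Qset d \<delta>. smult (r \<tau>') (Cm \<tau>' \<tau>))"

definition DeltaAlg :: "nat \<Rightarrow> real \<Rightarrow> (planted list \<Rightarrow>\<^sub>0 real) \<Rightarrow> (planted list \<times> planted list \<Rightarrow>\<^sub>0 real)" where
  "DeltaAlg d \<delta> x = lin (deltaF d \<delta>) x"

definition RtensId :: "nat \<Rightarrow> real \<Rightarrow> (tree \<Rightarrow> real) \<Rightarrow> (tree \<times> planted list \<Rightarrow>\<^sub>0 real)
     \<Rightarrow> (planted list \<times> planted list \<Rightarrow>\<^sub>0 real)" where
  "RtensId d \<delta> r D = lin (\<lambda>(\<sigma>, f). lin (\<lambda>w. sg (w, f)) (Rop d \<delta> r \<sigma>)) D"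

end

theory Submission
  imports Defs
begin

(* Since q_F \<tau> = C_-(\<I>(1)\<I>(1)\<I>(1), \<tau>), the operator R is a linear combination of the maps
   C_-(t, .) with t a tree product.  By induction on \<tau>, \<Delta> C_-(t, \<tau>) = (C_-(t, .) \<otimes> Id) \<Delta>\<I>(\<tau>)
   for every t: for t a tree product both sides are multiplicative (the truncation in \<Delta> never
   applies, as every left factor of \<Delta>\<tau> has order at most |\<tau>| \<le> 0), and for the generators
   t = 1, X_i, \<Xi> the identity is checked directly.  For a tree product t the map C_-(t, .) kills
   1 and X_i, hence the terms by which \<Delta>\<I>(\<tau>) exceeds \<Delta>\<tau>, and the theorem follows by linearity. *)

section \<open>Linear extension\<close>

lemma lookup_smult [simp]: "Poly_Mapping.lookup (smult c p) k = c * Poly_Mapping.lookup p k"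
  by (simp add: smult_def map.rep_eq when_def)

lemma lookup_sg: "Poly_Mapping.lookup (sg k) x = (if k = x then 1 else 0)"
  by (simp add: sg_def lookup_single when_def)

lemma keys_sg [simp]: "Poly_Mapping.keys (sg k) = {k}"
  by (simp add: sg_def)

lemma lookup_lin:
  "Poly_Mapping.lookup (lin f p) x =
     (\<Sum>k\<in>Poly_Mapping.keys p. Poly_Mapping.lookup p k * Poly_Mapping.lookup (f k) x)"
  by (simp add: lin_def lookup_sum)

lemma lookup_lin_superset:
  assumes "finite S" "Poly_Mapping.keys p \<subseteq> S"
  shows "Poly_Mapping.lookup (lin f p) x =
           (\<Sum>k\<in>S. Poly_Mapping.lookup p k * Poly_Mapping.lookup (f k) x)"
  unfolding lookup_lin by (rule sum.mono_neutral_left) (use assms in \<open>auto simp: in_keys_iff\<close>)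

lemma lin_add: "lin f (p + q) = lin f p + lin f q"
proof (rule poly_mapping_eqI)
  fix x
  let ?S = "Poly_Mapping.keys p \<union> Poly_Mapping.keys q"
  have "Poly_Mapping.lookup (lin f (p + q)) x =
          (\<Sum>k\<in>?S. Poly_Mapping.lookup (p + q) k * Poly_Mapping.lookup (f k) x)"
    by (rule lookup_lin_superset) (auto simp: keys_add)
  also have "\<dots> = Poly_Mapping.lookup (lin f p) x + Poly_Mapping.lookup (lin f q) x"
    by (simp add: lookup_add distrib_right sum.distrib lookup_lin_superset[where S = ?S])
  finally show "Poly_Mapping.lookup (lin f (p + q)) x = Poly_Mapping.lookup (lin f p + lin f q) x"
    by (simp add: lookup_add)
qed

lemma lin_zero [simp]: "lin f 0 = 0"
  by (simp add: lin_def)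

lemma smult_one [simp]: "smult 1 p = p"
  by (rule poly_mapping_eqI) simp

lemma lin_sg [simp]: "lin f (sg k) = f k"
  by (simp add: lin_def sg_def)

lemma lin_smult: "lin f (smult c p) = smult c (lin f p)"
proof (rule poly_mapping_eqI)
  fix x
  have "Poly_Mapping.lookup (lin f (smult c p)) x =
          (\<Sum>k\<in>Poly_Mapping.keys p. c * Poly_Mapping.lookup p k * Poly_Mapping.lookup (f k) x)"
    by (subst lookup_lin_superset[where S = "Poly_Mapping.keys p"]) (auto simp: in_keys_iff)
  then show "Poly_Mapping.lookup (lin f (smult c p)) x = Poly_Mapping.lookup (smult c (lin f p)) x"
    by (simp add: lookup_lin sum_distrib_left mult.assoc)
qed

lemma lin_sum: "lin f (sum g A) = (\<Sum>x\<in>A. lin f (g x))"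
  by (induction A rule: infinite_finite_induct) (auto simp: lin_add)

lemma lin_add_fun: "lin (\<lambda>k. f k + g k) p = lin f p + lin g p"
  by (rule poly_mapping_eqI) (simp add: lookup_lin lookup_add distrib_left sum.distrib)

lemma lin_smult_fun: "lin (\<lambda>k. smult c (f k)) p = smult c (lin f p)"
  by (rule poly_mapping_eqI) (simp add: lookup_lin sum_distrib_left algebra_simps)

lemma lin_zero_fun [simp]: "lin (\<lambda>k. 0) p = 0"
  by (rule poly_mapping_eqI) (simp add: lookup_lin)

lemma lin_sum_fun: "lin (\<lambda>k. \<Sum>x\<in>A. g x k) p = (\<Sum>x\<in>A. lin (g x) p)"
  by (induction A rule: infinite_finite_induct) (auto simp: lin_add_fun)

lemma lin_cong: "(\<And>k. k \<in> Poly_Mapping.keys p \<Longrightarrow> f k = g k) \<Longrightarrow> lin f p = lin g p"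
  by (simp add: lin_def)

lemma lin_lin: "lin g (lin f p) = lin (\<lambda>k. lin g (f k)) p"
  unfolding lin_def[of f] by (simp add: lin_sum lin_smult lin_def[of "\<lambda>k. lin g (f k)"])

lemma lin_commute: "lin (\<lambda>x. lin (h x) q) p = lin (\<lambda>y. lin (\<lambda>x. h x y) p) q"
  by (rule poly_mapping_eqI)
     (simp add: lookup_lin sum_distrib_left mult.left_commute sum.swap[where A = "Poly_Mapping.keys p"])

lemma lin_sg_fun [simp]: "lin sg p = p"
proof (rule poly_mapping_eqI)
  fix x
  have "Poly_Mapping.lookup (lin sg p) x =
          (\<Sum>k\<in>Poly_Mapping.keys p. if k = x then Poly_Mapping.lookup p k else 0)"
    unfolding lookup_lin by (rule sum.cong) (auto simp: lookup_sg)
  then show "Poly_Mapping.lookup (lin sg p) x = Poly_Mapping.lookup p x"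
    by (simp add: sum.delta' in_keys_iff)
qed

lemma keys_lin: "Poly_Mapping.keys (lin f p) \<subseteq> (\<Union>k\<in>Poly_Mapping.keys p. Poly_Mapping.keys (f k))"
  by (auto simp: in_keys_iff lookup_lin intro: ccontr elim!: sum.not_neutral_contains_not_neutral)

section \<open>Products of forests and of tensors\<close>

definition mult_tens ::
  "('a list \<times> 'b list \<Rightarrow>\<^sub>0 real) \<Rightarrow> ('a list \<times> 'b list \<Rightarrow>\<^sub>0 real) \<Rightarrow> ('a list \<times> 'b list \<Rightarrow>\<^sub>0 real)"
  where "mult_tens U V = lin (\<lambda>(a, b). lin (\<lambda>(c, e). sg (a @ c, b @ e)) V) U"

definition mult_forest :: "('a list \<Rightarrow>\<^sub>0 real) \<Rightarrow> ('a list \<Rightarrow>\<^sub>0 real) \<Rightarrow> ('a list \<Rightarrow>\<^sub>0 real)"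
  where "mult_forest U V = lin (\<lambda>u. lin (\<lambda>v. sg (u @ v)) V) U"

definition tens_right :: "'b \<Rightarrow> ('a \<Rightarrow>\<^sub>0 real) \<Rightarrow> ('a \<times> 'b \<Rightarrow>\<^sub>0 real)"
  where "tens_right f C = lin (\<lambda>w. sg (w, f)) C"

lemma tens_right_sg [simp]: "tens_right f (sg w) = sg (w, f)"
  by (simp add: tens_right_def)

lemma tens_right_zero [simp]: "tens_right f 0 = 0"
  by (simp add: tens_right_def)

lemma mult_tens_lin_left: "mult_tens (lin F p) V = lin (\<lambda>k. mult_tens (F k) V) p"
  unfolding mult_tens_def by (rule lin_lin)

lemma mult_tens_lin_right: "mult_tens U (lin F q) = lin (\<lambda>k. mult_tens U (F k)) q"
  unfolding mult_tens_def split_def lin_lin by (rule lin_commute)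

lemma mult_tens_sg [simp]: "mult_tens (sg (a, b)) (sg (c, e)) = sg (a @ c, b @ e)"
  by (simp add: mult_tens_def)

lemma lin_sg_pair: "lin (\<lambda>(a, b). sg (a, b)) p = p"
  using lin_sg_fun[of p] by (simp add: case_prod_beta')

lemma mult_tens_unit_left [simp]: "mult_tens (sg ([], [])) V = V"
  by (simp add: mult_tens_def lin_sg_pair)

lemma mult_tens_basis_expand: "mult_tens U V = lin (\<lambda>x. mult_tens (sg x) V) U"
  using mult_tens_lin_left[of sg U V] by simp

lemma mult_tens_assoc: "mult_tens (mult_tens U V) W = mult_tens U (mult_tens V W)"
proof -
  have "mult_tens U V = lin (\<lambda>x. lin (\<lambda>y. sg (fst x @ fst y, snd x @ snd y)) V) U"
    by (simp add: mult_tens_def split_def)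
  then have "mult_tens (mult_tens U V) W =
      lin (\<lambda>x. lin (\<lambda>y. mult_tens (sg (fst x @ fst y, snd x @ snd y)) W) V) U"
    by (simp add: mult_tens_lin_left)
  also have "\<dots> = lin (\<lambda>x. lin (\<lambda>y. mult_tens (sg x) (mult_tens (sg y) W)) V) U"
    by (simp add: mult_tens_def split_def lin_lin)
  also have "\<dots> = lin (\<lambda>x. mult_tens (sg x) (mult_tens V W)) U"
    by (simp only: mult_tens_lin_right[symmetric] mult_tens_basis_expand[symmetric])
  also have "\<dots> = mult_tens U (mult_tens V W)"
    by (simp only: mult_tens_basis_expand[symmetric])
  finally show ?thesis .
qed

lemma deltaF_Cons: "deltaF d \<delta> (p # ps) = mult_tens (deltaP d \<delta> p) (deltaF d \<delta> ps)"
  by (simp add: mult_tens_def)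

lemma deltaF_append: "deltaF d \<delta> (u @ v) = mult_tens (deltaF d \<delta> u) (deltaF d \<delta> v)"
  by (induction u) (simp_all only: append.simps deltaF_Cons mult_tens_assoc deltaF.simps(1) mult_tens_unit_left)

lemma DeltaAlg_add: "DeltaAlg d \<delta> (p + q) = DeltaAlg d \<delta> p + DeltaAlg d \<delta> q"
  by (simp add: DeltaAlg_def lin_add)

lemma DeltaAlg_zero [simp]: "DeltaAlg d \<delta> 0 = 0"
  by (simp add: DeltaAlg_def)

lemma DeltaAlg_smult: "DeltaAlg d \<delta> (smult c p) = smult c (DeltaAlg d \<delta> p)"
  by (simp add: DeltaAlg_def lin_smult)

lemma DeltaAlg_sum: "DeltaAlg d \<delta> (sum g A) = (\<Sum>x\<in>A. DeltaAlg d \<delta> (g x))"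
  by (simp add: DeltaAlg_def lin_sum)

lemma DeltaAlg_planted [simp]: "DeltaAlg d \<delta> (sg [p]) = deltaP d \<delta> p"
  by (simp add: DeltaAlg_def deltaF_Cons mult_tens_def lin_sg_pair)

lemma DeltaAlg_unit [simp]: "DeltaAlg d \<delta> (sg []) = sg ([], [])"
  by (simp add: DeltaAlg_def)

lemma DeltaAlg_mult_forest:
  "DeltaAlg d \<delta> (mult_forest p q) = mult_tens (DeltaAlg d \<delta> p) (DeltaAlg d \<delta> q)"
  unfolding DeltaAlg_def mult_forest_def
  by (simp add: lin_lin deltaF_append mult_tens_lin_left mult_tens_lin_right) (rule lin_commute)

lemma mult_tens_tens_right:
  "mult_tens (tens_right f C) (tens_right g D) = tens_right (f @ g) (mult_forest C D)"
  by (simp add: tens_right_def mult_forest_def lin_lin mult_tens_lin_left mult_tens_lin_right)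
     (rule lin_commute)

lemma Cm_P_P: "Cm (P a' b' c') (P a b c) = mult_forest (Cm a' a) (mult_forest (Cm b' b) (Cm c' c))"
  by (simp add: mult_forest_def lin_lin)

section \<open>Orders of left factors and truncation\<close>

declare deltaT.simps(4) [simp del]

lemma ord_gt_minus_3: "0 < \<delta> \<Longrightarrow> -3 < ord \<delta> t"
  by (induction t) auto

lemma ord_factors_le0:
  assumes "0 < \<delta>" "ord \<delta> (P a b c) \<le> 0"
  shows "ord \<delta> a \<le> 0" "ord \<delta> b \<le> 0" "ord \<delta> c \<le> 0"
  using assms ord_gt_minus_3[OF assms(1), of a] ord_gt_minus_3[OF assms(1), of b]
    ord_gt_minus_3[OF assms(1), of c] by auto

lemma inW_factors:
  assumes "0 < \<delta>" "inW \<delta> (P a b c)"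
  shows "inW \<delta> a" "inW \<delta> b" "inW \<delta> c"
  using assms ord_gt_minus_3[OF assms(1), of a] ord_gt_minus_3[OF assms(1), of b]
    ord_gt_minus_3[OF assms(1), of c] by (auto simp: inW_def)

lemma inW_or_inNo: "\<not> isPoly a \<Longrightarrow> ord \<delta> a \<le> 0 \<Longrightarrow> inW \<delta> a \<or> inNo \<delta> a"
  by (auto simp: inW_def inNo_def inN_def)

lemma inW_Xi: "\<delta> < 1 \<Longrightarrow> inW \<delta> Xi"
  by (simp add: inW_def)

lemma not_inNt_if_inW: "inW \<delta> a \<Longrightarrow> \<not> inNt \<delta> a"
  by (simp add: inNt_def inNo_def inN_def inW_def)

lemma dI_inW: "inW \<delta> a \<Longrightarrow> dI d \<delta> a D = sg (a, [])"
  by (cases a) (auto simp: dI_def inW_def)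

lemma dI_inNo:
  assumes "\<not> isPoly a" "\<not> inW \<delta> a" "inNo \<delta> a"
  shows "dI d \<delta> a D = sg (One, [I a]) + (\<Sum>i\<in>{1..d}. lin (\<lambda>w. sg (X i, w)) (mkIp \<delta> i a)) + D"
  using assms by (cases a) (auto simp: dI_def isPoly_def)

lemma deltaT_inW: "\<not> isPoly a \<Longrightarrow> inW \<delta> a \<Longrightarrow> deltaT d \<delta> a = sg (a, [])"
  by (cases a) (auto simp: isPoly_def deltaT.simps(4))

lemma keys_mul3:
  assumes "k \<in> Poly_Mapping.keys (mul3 \<delta> U V W)"
  obtains s1 f1 s2 f2 s3 f3 where "(s1, f1) \<in> Poly_Mapping.keys U" "(s2, f2) \<in> Poly_Mapping.keys V"
    "(s3, f3) \<in> Poly_Mapping.keys W" "k = (P s1 s2 s3, f1 @ f2 @ f3)"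
  using assms unfolding mul3_def
  by (fastforce dest!: keys_lin[THEN subsetD] split: if_splits prod.splits)

lemma keys_sum_mkIp:
  assumes "\<not> isPoly a" "k \<in> Poly_Mapping.keys (\<Sum>i\<in>A. lin (\<lambda>w. sg (X i, w)) (mkIp \<delta> i a))"
  shows "inNt \<delta> a \<and> (\<exists>i. fst k = X i)"
proof -
  obtain i where "k \<in> Poly_Mapping.keys (lin (\<lambda>w. sg (X i, w)) (mkIp \<delta> i a))"
    using keys_sum[THEN subsetD, OF assms(2)] by blast
  moreover have "lin (\<lambda>w. sg (X i, w)) (mkIp \<delta> i a) = (if inNt \<delta> a then sg (X i, [Ip i a]) else 0)"
    using assms(1) by (simp add: mkIp_def isPoly_def)
  ultimately show ?thesis by (simp split: if_splits)
qed

lemma ord_left_factor_dI: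
  assumes "\<And>k. k \<in> Poly_Mapping.keys D \<Longrightarrow> ord \<delta> (fst k) \<le> ord \<delta> a"
    and "k \<in> Poly_Mapping.keys (dI d \<delta> a D)"
  shows "ord \<delta> (fst k) \<le> ord \<delta> a"
proof (cases "isPoly a")
  case True
  then show ?thesis
    using assms(2) by (auto simp: isPoly_def dI_def dest!: keys_add[THEN subsetD])
next
  case not_poly: False
  consider "inW \<delta> a" | "\<not> inW \<delta> a" "inNo \<delta> a" | "\<not> inW \<delta> a" "\<not> inNo \<delta> a"
    by blast
  then show ?thesis
  proof cases
    case 1
    then show ?thesis using assms(2) by (simp add: dI_inW)
  next
    case 2
    let ?S = "\<Sum>i\<in>{1..d}. lin (\<lambda>w. sg (X i, w)) (mkIp \<delta> i a)"
    have "k \<in> Poly_Mapping.keys (sg (One, [I a]) + ?S + D)"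
      using assms(2) 2 not_poly by (simp add: dI_inNo)
    then consider "k = (One, [I a])" | "k \<in> Poly_Mapping.keys ?S" | "k \<in> Poly_Mapping.keys D"
      using keys_add[of "sg (One, [I a]) + ?S" D] keys_add[of "sg (One, [I a])" ?S] by auto
    then show ?thesis
    proof cases
      case 1
      then show ?thesis using 2 by (simp add: inNo_def inN_def)
    next
      case 2
      then show ?thesis using keys_sum_mkIp[OF not_poly 2] by (auto simp: inNt_def)
    next
      case 3
      then show ?thesis by (rule assms(1))
    qed
  next
    case 3
    then show ?thesis using assms(2) not_poly by (cases a) (simp_all add: dI_def isPoly_def)
  qed
qed

lemma ord_left_factor_deltaT:
  assumes "0 < \<delta>"
  shows "ord \<delta> a \<le> 0 \<Longrightarrow> k \<in> Poly_Mapping.keys (deltaT d \<delta> a) \<Longrightarrow> ord \<delta> (fst k) \<le> ord \<delta> a"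
proof (induction a arbitrary: k)
  case (P a b c)
  note factors = ord_factors_le0[OF assms P.prems(1)]
  show ?case
  proof (cases "inW \<delta> (P a b c)")
    case True
    then show ?thesis using P.prems(2) by (simp add: deltaT.simps(4))
  next
    case False
    then have "k \<in> Poly_Mapping.keys (mul3 \<delta> (dI d \<delta> a (deltaT d \<delta> a))
        (dI d \<delta> b (deltaT d \<delta> b)) (dI d \<delta> c (deltaT d \<delta> c)))"
      using P.prems by (simp add: deltaT.simps(4))
    then obtain s1 f1 s2 f2 s3 f3 where
      "(s1, f1) \<in> Poly_Mapping.keys (dI d \<delta> a (deltaT d \<delta> a))"
      "(s2, f2) \<in> Poly_Mapping.keys (dI d \<delta> b (deltaT d \<delta> b))"
      "(s3, f3) \<in> Poly_Mapping.keys (dI d \<delta> c (deltaT d \<delta> c))"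
      "k = (P s1 s2 s3, f1 @ f2 @ f3)"
      by (rule keys_mul3)
    moreover have "ord \<delta> s1 \<le> ord \<delta> a" "ord \<delta> s2 \<le> ord \<delta> b" "ord \<delta> s3 \<le> ord \<delta> c"
      using ord_left_factor_dI[OF P.IH(1)[OF factors(1)] calculation(1)]
        ord_left_factor_dI[OF P.IH(2)[OF factors(2)] calculation(2)]
        ord_left_factor_dI[OF P.IH(3)[OF factors(3)] calculation(3)] by simp_all
    ultimately show ?thesis by simp
  qed
qed auto

definition mul3_untrunc ::
  "(tree \<times> planted list \<Rightarrow>\<^sub>0 real) \<Rightarrow> (tree \<times> planted list \<Rightarrow>\<^sub>0 real)
     \<Rightarrow> (tree \<times> planted list \<Rightarrow>\<^sub>0 real) \<Rightarrow> (tree \<times> planted list \<Rightarrow>\<^sub>0 real)"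
  where "mul3_untrunc p1 p2 p3 =
     lin (\<lambda>(s1, f1). lin (\<lambda>(s2, f2). lin (\<lambda>(s3, f3). sg (P s1 s2 s3, f1 @ f2 @ f3)) p3) p2) p1"

lemma mul3_eq_mul3_untrunc:
  assumes "\<And>s1 f1 s2 f2 s3 f3. (s1, f1) \<in> Poly_Mapping.keys U \<Longrightarrow> (s2, f2) \<in> Poly_Mapping.keys V
             \<Longrightarrow> (s3, f3) \<in> Poly_Mapping.keys W \<Longrightarrow> ord \<delta> (P s1 s2 s3) \<le> 0"
  shows "mul3 \<delta> U V W = mul3_untrunc U V W"
  unfolding mul3_def mul3_untrunc_def
  by (rule lin_cong, clarsimp)+ (fastforce dest: assms)

lemma deltaT_P_mul3_untrunc:
  assumes "0 < \<delta>" "ord \<delta> (P a b c) \<le> 0"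
  shows "deltaT d \<delta> (P a b c) =
    mul3_untrunc (dI d \<delta> a (deltaT d \<delta> a)) (dI d \<delta> b (deltaT d \<delta> b)) (dI d \<delta> c (deltaT d \<delta> c))"
proof (cases "inW \<delta> (P a b c)")
  case True
  then show ?thesis
    using inW_factors[OF assms(1) True] by (simp add: deltaT.simps(4) dI_inW mul3_untrunc_def)
next
  case False
  have ord_key: "ord \<delta> s \<le> ord \<delta> x"
    if "ord \<delta> x \<le> 0" "(s, f) \<in> Poly_Mapping.keys (dI d \<delta> x (deltaT d \<delta> x))" for s f x
    using ord_left_factor_dI[OF ord_left_factor_deltaT[OF assms(1) that(1)] that(2)] by simp
  have "mul3 \<delta> (dI d \<delta> a (deltaT d \<delta> a)) (dI d \<delta> b (deltaT d \<delta> b)) (dI d \<delta> c (deltaT d \<delta> c))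
      = mul3_untrunc (dI d \<delta> a (deltaT d \<delta> a)) (dI d \<delta> b (deltaT d \<delta> b)) (dI d \<delta> c (deltaT d \<delta> c))"
  proof (rule mul3_eq_mul3_untrunc)
    fix s1 f1 s2 f2 s3 f3
    assume "(s1, f1) \<in> Poly_Mapping.keys (dI d \<delta> a (deltaT d \<delta> a))"
      "(s2, f2) \<in> Poly_Mapping.keys (dI d \<delta> b (deltaT d \<delta> b))"
      "(s3, f3) \<in> Poly_Mapping.keys (dI d \<delta> c (deltaT d \<delta> c))"
    then have "ord \<delta> s1 \<le> ord \<delta> a" "ord \<delta> s2 \<le> ord \<delta> b" "ord \<delta> s3 \<le> ord \<delta> c"
      using ord_factors_le0[OF assms] by (auto intro: ord_key)
    then show "ord \<delta> (P s1 s2 s3) \<le> 0" using assms(2) by simp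
  qed
  then show ?thesis
    using False assms(2) by (simp add: deltaT.simps(4))
qed

section \<open>The coproduct of \<open>C_-\<close>\<close>

definition CmtensId :: "tree \<Rightarrow> (tree \<times> planted list \<Rightarrow>\<^sub>0 real) \<Rightarrow> (planted list \<times> planted list \<Rightarrow>\<^sub>0 real)"
  where "CmtensId t D = lin (\<lambda>(\<sigma>, f). tens_right f (Cm t \<sigma>)) D"

lemma CmtensId_sg [simp]: "CmtensId t (sg (\<sigma>, f)) = tens_right f (Cm t \<sigma>)"
  by (simp add: CmtensId_def)

lemma CmtensId_zero [simp]: "CmtensId t 0 = 0"
  by (simp add: CmtensId_def)

lemma CmtensId_add: "CmtensId t (U + V) = CmtensId t U + CmtensId t V"
  by (simp add: CmtensId_def lin_add)

lemma CmtensId_sum: "CmtensId t (sum g A) = (\<Sum>x\<in>A. CmtensId t (g x))"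
  by (simp add: CmtensId_def lin_sum)

lemma CmtensId_lin: "CmtensId t (lin g p) = lin (\<lambda>k. CmtensId t (g k)) p"
  unfolding CmtensId_def by (rule lin_lin)

lemma Cm_One_left: "Cm One a = sg [I a]"
  by (cases a) auto

lemma Cm_X_left: "Cm (X i) a = mkIm i a"
  by (cases a) (auto simp: mkIm_def isPoly_def)

lemma CmtensId_P_mul3_untrunc:
  "CmtensId (P b1 b2 b3) (mul3_untrunc U V W) =
     mult_tens (CmtensId b1 U) (mult_tens (CmtensId b2 V) (CmtensId b3 W))"
proof -
  have "CmtensId (P b1 b2 b3) (mul3_untrunc U V W) =
      lin (\<lambda>k1. lin (\<lambda>k2. lin (\<lambda>k3.
        mult_tens (tens_right (snd k1) (Cm b1 (fst k1)))
          (mult_tens (tens_right (snd k2) (Cm b2 (fst k2))) (tens_right (snd k3) (Cm b3 (fst k3)))))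
        W) V) U"
    unfolding mul3_untrunc_def
    by (simp del: Cm.simps add: CmtensId_lin split_def Cm_P_P mult_tens_tens_right)
  also have "\<dots> = mult_tens (lin (\<lambda>k. tens_right (snd k) (Cm b1 (fst k))) U)
      (mult_tens (lin (\<lambda>k. tens_right (snd k) (Cm b2 (fst k))) V)
        (lin (\<lambda>k. tens_right (snd k) (Cm b3 (fst k))) W))"
    by (simp only: mult_tens_lin_left) (simp only: mult_tens_lin_right)
  also have "\<dots> = mult_tens (CmtensId b1 U) (mult_tens (CmtensId b2 V) (CmtensId b3 W))"
    by (simp add: CmtensId_def split_def)
  finally show ?thesis .
qed

lemma CmtensId_Xi_mul3_untrunc: "CmtensId Xi (mul3_untrunc U V W) = 0"
  unfolding mul3_untrunc_def by (simp add: CmtensId_lin split_def)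

lemma CmtensId_dI_eq_deltaT:
  assumes "\<not> isPoly t" "\<not> isPoly a" "ord \<delta> a \<le> 0"
  shows "CmtensId t (dI d \<delta> a (deltaT d \<delta> a)) = CmtensId t (deltaT d \<delta> a)"
proof (cases "inW \<delta> a")
  case True
  then show ?thesis using assms(2) by (simp add: dI_inW deltaT_inW)
next
  case False
  then have "inNo \<delta> a" using inW_or_inNo assms(2,3) by blast
  moreover have "Cm t One = 0" "Cm t (X j) = 0" for j
    using assms(1) by (cases t; simp add: isPoly_def)+
  ultimately show ?thesis
    using False assms(2) by (simp add: dI_inNo CmtensId_add CmtensId_sum CmtensId_lin)
qed

lemma DeltaAlg_Cm_One: "DeltaAlg d \<delta> (Cm One a) = CmtensId One (dI d \<delta> a (deltaT d \<delta> a))"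
  by (simp add: Cm_One_left deltaP_def CmtensId_def tens_right_def)

lemma CmtensId_X_dI_inNo:
  assumes "i \<in> {1..d}" "\<not> isPoly a" "\<not> inW \<delta> a" "inNo \<delta> a"
  shows "CmtensId (X i) (dI d \<delta> a D) = lin (\<lambda>w. sg ([Ip i (X i)], w)) (mkIp \<delta> i a) + CmtensId (X i) D"
proof -
  have one: "CmtensId (X i) (sg (One, [I a])) = 0"
    by (simp add: Cm_X_left mkIm_def isPoly_def)
  have tail: "lin (\<lambda>w. CmtensId (X i) (sg (X j, w))) p =
      (if j = i then lin (\<lambda>w. sg ([Ip i (X i)], w)) p else 0)" for j p
    by (cases "j = i") (simp_all add: Cm_X_left mkIm_def isPoly_def)
  have "CmtensId (X i) (dI d \<delta> a D) = CmtensId (X i) (sg (One, [I a]))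
      + (\<Sum>j\<in>{1..d}. lin (\<lambda>w. CmtensId (X i) (sg (X j, w))) (mkIp \<delta> j a)) + CmtensId (X i) D"
    unfolding dI_inNo[OF assms(2-4)] by (simp only: CmtensId_add CmtensId_sum CmtensId_lin)
  then show ?thesis
    using assms(1) by (simp only: one tail add_0_left) (simp add: sum.delta)
qed

lemma DeltaAlg_Cm_X:
  assumes "\<delta> < 1" "i \<in> {1..d}" "ord \<delta> a \<le> 0"
  shows "DeltaAlg d \<delta> (Cm (X i) a) = CmtensId (X i) (dI d \<delta> a (deltaT d \<delta> a))"
proof (cases "isPoly a")
  case True
  then show ?thesis
    by (cases "a = X i") (auto simp: isPoly_def Cm_X_left dI_def mkIm_def deltaP_def CmtensId_add)
next
  case not_poly: False
  have lhs: "DeltaAlg d \<delta> (Cm (X i) a) =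
      lin (\<lambda>w. sg ([Ip i (X i)], w)) (mkIp \<delta> i a) + CmtensId (X i) (deltaT d \<delta> a)"
    using not_poly
    by (auto simp: Cm_X_left mkIm_def deltaP_def CmtensId_def tens_right_def isPoly_def add.commute)
  show ?thesis
  proof (cases "inW \<delta> a")
    case True
    then have "mkIp \<delta> i a = 0"
      using not_poly not_inNt_if_inW by (auto simp: mkIp_def isPoly_def)
    then show ?thesis using lhs True not_poly by (simp add: dI_inW deltaT_inW)
  next
    case False
    then have "inNo \<delta> a" using inW_or_inNo not_poly assms(3) by blast
    then show ?thesis using lhs CmtensId_X_dI_inNo[OF assms(2) not_poly False] by simp
  qed
qed

lemma DeltaAlg_Cm_Xi:
  assumes "0 < \<delta>" "\<delta> < 1" "ord \<delta> a \<le> 0"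
  shows "DeltaAlg d \<delta> (Cm Xi a) = CmtensId Xi (dI d \<delta> a (deltaT d \<delta> a))"
proof (cases a)
  case (P a1 a2 a3)
  have "CmtensId Xi (dI d \<delta> a (deltaT d \<delta> a)) = CmtensId Xi (deltaT d \<delta> a)"
    using assms(3) P by (intro CmtensId_dI_eq_deltaT) (auto simp: isPoly_def)
  also have "\<dots> = 0"
    using P deltaT_P_mul3_untrunc[OF assms(1)] assms(3) by (simp add: CmtensId_Xi_mul3_untrunc)
  finally show ?thesis using P by simp
qed (use dI_inW[OF inW_Xi[OF assms(2)]] in \<open>simp_all add: dI_def CmtensId_add\<close>)

lemma DeltaAlg_Cm_P_right_generator:
  assumes "\<delta> < 1" "\<And>a1 a2 a3. a \<noteq> P a1 a2 a3"
  shows "DeltaAlg d \<delta> (Cm (P b1 b2 b3) a) = CmtensId (P b1 b2 b3) (dI d \<delta> a (deltaT d \<delta> a))"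
proof (cases a)
  case (P a1 a2 a3)
  with assms(2) show ?thesis by blast
qed (use dI_inW[OF inW_Xi[OF assms(1)]] in \<open>simp_all add: dI_def CmtensId_add\<close>)

lemma DeltaAlg_Cm_left_generator:
  assumes "0 < \<delta>" "\<delta> < 1" "valid d t" "ord \<delta> a \<le> 0" "\<And>b1 b2 b3. t \<noteq> P b1 b2 b3"
  shows "DeltaAlg d \<delta> (Cm t a) = CmtensId t (dI d \<delta> a (deltaT d \<delta> a))"
  using assms DeltaAlg_Cm_One DeltaAlg_Cm_X DeltaAlg_Cm_Xi by (cases t) auto

lemma DeltaAlg_Cm:
  assumes "0 < \<delta>" "\<delta> < 1"
  shows "valid d t \<Longrightarrow> ord \<delta> a \<le> 0 \<Longrightarrow>
           DeltaAlg d \<delta> (Cm t a) = CmtensId t (dI d \<delta> a (deltaT d \<delta> a))"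
proof (induction a arbitrary: t)
  case (P a1 a2 a3)
  show ?case
  proof (cases "\<exists>b1 b2 b3. t = P b1 b2 b3")
    case True
    then obtain b1 b2 b3 where t: "t = P b1 b2 b3" by blast
    note factors = ord_factors_le0[OF assms(1) P.prems(2)]
    have "DeltaAlg d \<delta> (Cm t (P a1 a2 a3)) = mult_tens (DeltaAlg d \<delta> (Cm b1 a1))
        (mult_tens (DeltaAlg d \<delta> (Cm b2 a2)) (DeltaAlg d \<delta> (Cm b3 a3)))"
      by (simp del: Cm.simps add: t Cm_P_P DeltaAlg_mult_forest)
    also have "\<dots> = CmtensId t (mul3_untrunc (dI d \<delta> a1 (deltaT d \<delta> a1))
        (dI d \<delta> a2 (deltaT d \<delta> a2)) (dI d \<delta> a3 (deltaT d \<delta> a3)))"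
      using P.IH P.prems(1) factors by (simp add: t CmtensId_P_mul3_untrunc)
    also have "\<dots> = CmtensId t (deltaT d \<delta> (P a1 a2 a3))"
      by (simp only: deltaT_P_mul3_untrunc[OF assms(1) P.prems(2)])
    also have "\<dots> = CmtensId t (dI d \<delta> (P a1 a2 a3) (deltaT d \<delta> (P a1 a2 a3)))"
      using P.prems(2) by (intro CmtensId_dI_eq_deltaT[symmetric]) (auto simp: t isPoly_def)
    finally show ?thesis .
  next
    case False
    then show ?thesis using DeltaAlg_Cm_left_generator[OF assms P.prems] by blast
  qed
qed (metis DeltaAlg_Cm_left_generator[OF assms] DeltaAlg_Cm_P_right_generator[OF assms(2)] tree.distinct)+

lemma DeltaAlg_Cm_P:
  assumes "0 < \<delta>" "\<delta> < 1" "valid d (P b1 b2 b3)" "\<not> isPoly a" "ord \<delta> a \<le> 0"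
  shows "DeltaAlg d \<delta> (Cm (P b1 b2 b3) a) = CmtensId (P b1 b2 b3) (deltaT d \<delta> a)"
  using DeltaAlg_Cm[OF assms(1-3,5)] CmtensId_dI_eq_deltaT[OF _ assms(4,5)] by (simp add: isPoly_def)

lemma Rop_eq_Cm: "Rop d \<delta> r \<tau> = Cm (P One One One) \<tau> + (\<Sum>t\<in>Qset d \<delta>. smult (r t) (Cm t \<tau>))"
  unfolding Rop_def by (cases \<tau>) (simp_all add: Cm_One_left)

lemma RtensId_eq_CmtensId:
  "RtensId d \<delta> r D = CmtensId (P One One One) D + (\<Sum>t\<in>Qset d \<delta>. smult (r t) (CmtensId t D))"
  unfolding RtensId_def CmtensId_def Rop_eq_Cm
  by (simp del: Cm.simps add: tens_right_def lin_add lin_sum lin_smult split_def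
      flip: lin_add_fun lin_sum_fun lin_smult_fun)

theorem lemma8p7:
  fixes d :: nat and \<delta> :: real and r :: "tree \<Rightarrow> real" and \<tau> :: tree
  assumes "d \<ge> 1" and "0 < \<delta>" and "\<delta> < 1"
    and standing: "\<And>\<sigma>. valid d \<sigma> \<Longrightarrow> inW \<delta> \<sigma> \<or> inNo \<delta> \<sigma> \<Longrightarrow> \<sigma> \<noteq> P One One One
                     \<Longrightarrow> ord \<delta> \<sigma> \<notin> \<int>"
    and r_sym: "\<And>a b c. P a b c \<in> Qset d \<delta> \<Longrightarrow>
                  r (P a b c) = r (P b a c) \<and> r (P a b c) = r (P a c b) \<and>
                  r (P a b c) = r (P c b a) \<and> r (P a b c) = r (P b c a) \<and>
                  r (P a b c) = r (P c a b)"
    and "valid d \<tau>" and "inNo \<delta> \<tau> \<or> inWo \<delta> \<tau>"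
  shows "DeltaAlg d \<delta> (Rop d \<delta> r \<tau>) = RtensId d \<delta> r (deltaT d \<delta> \<tau>)"
proof -
  have "\<not> isPoly \<tau>" "ord \<delta> \<tau> \<le> 0"
    using assms(7) by (auto simp: inNo_def inWo_def inW_def inN_def isPoly_def)
  then have Delta_Cm: "DeltaAlg d \<delta> (Cm t \<tau>) = CmtensId t (deltaT d \<delta> \<tau>)"
    if "t \<in> insert (P One One One) (Qset d \<delta>)" for t
    using that DeltaAlg_Cm_P[OF assms(2,3)] by (auto simp: Qset_def)
  show ?thesis
    unfolding Rop_eq_Cm RtensId_eq_CmtensId
    by (simp add: DeltaAlg_add DeltaAlg_sum DeltaAlg_smult Delta_Cm)
qed

end
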